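(* Let $P=\forall x_1,\dots,x_n\,\exists y_1(D_1),\dots,y_k(D_k)$ be a prefix, let $G_{\mathrm{syn}}$ be an admissible group w.r.t. $P$, and let $g\in G_{\mathrm{syn}}$. If $j\in\{1,\dots,k\}$ and $\sigma\in\mathcal A(X)$ are such that $[x]_\sigma=[g(x)]_\sigma$ for all $x\in D_j$ and $g(y_j)\in\operatorname{BF}(\{y_l\mid D_j=D_l\})$, then $[g(y_j)]_{\sigma_s}=[y_j]_{\sigma_{g(s)}}$ for all $s\in\mathcal S(P)$.
   Context: $X=\{x_1,\dots,x_n\}$, $Y=\{y_1,\dots,y_k\}$ are finite disjoint sets of propositional variables; $\operatorname{BF}(V)$ the propositional formulas over $V\subseteq X\cup Y$; $\mathcal A(V)$ the assignments $V\to\{\top,\bot\}$; $[\phi]_\sigma$ the truth value; $D_j\subseteq X$. An interpretation is $s=(s_1,\dots,s_k)$ with $s_j:\{\top,\bot\}^{|D_j|}\to\{\top,\bot\}$; $\mathcal S(P)$ the set of interpretations. For $\sigma\in\mathcal A(X)$, $\sigma_s\in\mathcal A(X\cup Y)$ equals $\sigma$ on $X$ and $\sigma_s(y_j)=s_j$ evaluated at $\sigma$'s values on $D_j$. For $g:\operatorname{BF}(V)\to\operatorname{BF}(V)$ and $\rho\in\mathcal A(V)$, $g(\rho)(v)=[g(v)]_\rho$; $g$ preserves propositional satisfiability if $[g(\phi)]_\rho=[\phi]_{g(\rho)}$ always. A formula in $\operatorname{BF}(Y)$ depends on $x_i$ if it contains some $y_j$ with $x_i\in D_j$. A bijection $g$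 of $\operatorname{BF}(X\cup Y)$ is admissible w.r.t. $P$ if it preserves propositional satisfiability, $g(x_i)\in\operatorname{BF}(X)$, $g(y_j)\in\operatorname{BF}(Y)$, and if $g(y_j)$ depends on $x_i$ then $g^{-1}(x_i)\in\operatorname{BF}(D_j)$. An admissible group is a subgroup of all admissible functions. For admissible $g$ and $\sigma\in\mathcal A(X)$, $g(\sigma)(x)=[g(x)]_\sigma$. For $g\in G_{\mathrm{syn}}$ and $s\in\mathcal S(P)$, $g(s)\in\mathcal S(P)$ is the (well-defined) interpretation $t$ with $\sigma_t=g(g^{-1}(\sigma)_s)$ for all $\sigma\in\mathcal A(X)$. *)

theory Defs
  imports Main
begin

text \<open>Propositional formulas over a variable type.  The variables are
  X \<union> Y, represented as the sum type 'x + 'y with x_i = Inl i, y_j = Inr j.\<close>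

datatype 'v form =
    FTop | FBot | Var 'v | FNot "'v form" | FAnd "'v form" "'v form"
  | FOr "'v form" "'v form" | FImp "'v form" "'v form" | FIff "'v form" "'v form"

primrec eval :: "('v \<Rightarrow> bool) \<Rightarrow> 'v form \<Rightarrow> bool" where
  "eval \<rho> FTop = True"
| "eval \<rho> FBot = False"
| "eval \<rho> (Var v) = \<rho> v"
| "eval \<rho> (FNot a) = (\<not> eval \<rho> a)"
| "eval \<rho> (FAnd a b) = (eval \<rho> a \<and> eval \<rho> b)"
| "eval \<rho> (FOr a b) = (eval \<rho> a \<or> eval \<rho> b)"
| "eval \<rho> (FImp a b) = (eval \<rho> a \<longrightarrow> eval \<rho> b)"
| "eval \<rho> (FIff a b) = (eval \<rho> a \<longleftrightarrow> eval \<rho> b)"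

primrec vars :: "'v form \<Rightarrow> 'v set" where
  "vars FTop = {}"
| "vars FBot = {}"
| "vars (Var v) = {v}"
| "vars (FNot a) = vars a"
| "vars (FAnd a b) = vars a \<union> vars b"
| "vars (FOr a b) = vars a \<union> vars b"
| "vars (FImp a b) = vars a \<union> vars b"
| "vars (FIff a b) = vars a \<union> vars b"

definition BF :: "'v set \<Rightarrow> 'v form set" where
  "BF V = {\<phi>. vars \<phi> \<subseteq> V}"

abbreviation Xs :: "('x + 'y) set" where "Xs \<equiv> range Inl"
abbreviation Ys :: "('x + 'y) set" where "Ys \<equiv> range Inr"

definition act_assign :: "('v form \<Rightarrow> 'v form) \<Rightarrow> ('v \<Rightarrow> bool) \<Rightarrow> ('v \<Rightarrow> bool)" where
  "act_assign g \<rho> = (\<lambda>v. eval \<rho> (g (Var v)))"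

definition preserves_sat :: "('v form \<Rightarrow> 'v form) \<Rightarrow> bool" where
  "preserves_sat g \<longleftrightarrow> (\<forall>\<phi> \<rho>. eval \<rho> (g \<phi>) = eval (act_assign g \<rho>) \<phi>)"

definition depends_on :: "('y \<Rightarrow> 'x set) \<Rightarrow> ('x + 'y) form \<Rightarrow> 'x \<Rightarrow> bool" where
  "depends_on D \<phi> x \<longleftrightarrow> (\<exists>y. Inr y \<in> vars \<phi> \<and> x \<in> D y)"

definition admissible :: "('y \<Rightarrow> 'x set) \<Rightarrow> (('x + 'y) form \<Rightarrow> ('x + 'y) form) \<Rightarrow> bool" where
  "admissible D g \<longleftrightarrow>
     bij g \<and> preserves_sat g \<and>
     (\<forall>x. g (Var (Inl x)) \<in> BF Xs) \<and>
     (\<forall>y. g (Var (Inr y)) \<in> BF Ys) \<and>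
     (\<forall>y x. depends_on D (g (Var (Inr y))) x \<longrightarrow> inv g (Var (Inl x)) \<in> BF (Inl ` D y))"

definition admissible_group :: "('y \<Rightarrow> 'x set) \<Rightarrow> (('x + 'y) form \<Rightarrow> ('x + 'y) form) set \<Rightarrow> bool" where
  "admissible_group D G \<longleftrightarrow>
     (\<forall>g\<in>G. admissible D g) \<and> id \<in> G \<and>
     (\<forall>g\<in>G. \<forall>h\<in>G. g \<circ> h \<in> G) \<and> (\<forall>g\<in>G. inv g \<in> G)"

text \<open>Interpretations: s_j is a Boolean function of the values of the variables in D_j,
  represented as a function of a full X-assignment that only depends on D_j.\<close>
definition interp :: "('y \<Rightarrow> 'x set) \<Rightarrow> ('y \<Rightarrow> ('x \<Rightarrow> bool) \<Rightarrow> bool) \<Rightarrow> bool" where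
  "interp D s \<longleftrightarrow> (\<forall>j \<sigma> \<tau>. (\<forall>x\<in>D j. \<sigma> x = \<tau> x) \<longrightarrow> s j \<sigma> = s j \<tau>)"

definition ext_assign :: "('x \<Rightarrow> bool) \<Rightarrow> ('y \<Rightarrow> ('x \<Rightarrow> bool) \<Rightarrow> bool) \<Rightarrow> ('x + 'y \<Rightarrow> bool)" where
  "ext_assign \<sigma> s = case_sum \<sigma> (\<lambda>j. s j \<sigma>)"

text \<open>g(\<sigma>)(x) = [g(x)]_\<sigma> for \<sigma> \<in> A(X) (g(x) \<in> BF(X), so values on Y are irrelevant).\<close>
definition act_X :: "(('x + 'y) form \<Rightarrow> ('x + 'y) form) \<Rightarrow> ('x \<Rightarrow> bool) \<Rightarrow> ('x \<Rightarrow> bool)" where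
  "act_X g \<sigma> = (\<lambda>x. eval (case_sum \<sigma> (\<lambda>_. False)) (g (Var (Inl x))))"

definition act_interp :: "('y \<Rightarrow> 'x set) \<Rightarrow> (('x + 'y) form \<Rightarrow> ('x + 'y) form)
    \<Rightarrow> ('y \<Rightarrow> ('x \<Rightarrow> bool) \<Rightarrow> bool) \<Rightarrow> ('y \<Rightarrow> ('x \<Rightarrow> bool) \<Rightarrow> bool)" where
  "act_interp D g s = (THE t. interp D t \<and>
     (\<forall>\<sigma>. ext_assign \<sigma> t = act_assign g (ext_assign (act_X (inv g) \<sigma>) s)))"

end

theory Submission
  imports Defs
begin

text \<open>Both sides are values of g(y_j): the left one under \<sigma>_s, the right one, by the explicit
  formula for g(s), under g^-1(\<sigma>)_s. An admissible g(y_j) only reads the X-variables on which it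
  depends, and on those g^-1(\<sigma>) agrees with \<sigma>: admissibility puts g^-1(x) into BF(D_j), where
  \<sigma> and g(\<sigma>) coincide, so g^-1(\<sigma>)(x) = g^-1(g(\<sigma>))(x) = \<sigma>(x).\<close>

lemma eval_cong: "(\<And>v. v \<in> vars \<phi> \<Longrightarrow> \<rho> v = \<rho>' v) \<Longrightarrow> eval \<rho> \<phi> = eval \<rho>' \<phi>"
  by (induction \<phi>) auto

lemma eval_BF_cong:
  "\<phi> \<in> BF V \<Longrightarrow> (\<And>v. v \<in> V \<Longrightarrow> \<rho> v = \<rho>' v) \<Longrightarrow> eval \<rho> \<phi> = eval \<rho>' \<phi>"
  unfolding BF_def by (rule eval_cong) blast

lemma act_X_cong:
  "h (Var (Inl x)) \<in> BF (Inl ` A) \<Longrightarrow> (\<And>x. x \<in> A \<Longrightarrow> \<sigma> x = \<tau> x) \<Longrightarrow>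
    act_X h \<sigma> x = act_X h \<tau> x"
  unfolding act_X_def by (erule eval_BF_cong) auto

lemma eval_ext_assign_BF_X:
  "\<phi> \<in> BF Xs \<Longrightarrow> eval (ext_assign \<sigma> s) \<phi> = eval (case_sum \<sigma> (\<lambda>_. False)) \<phi>"
  unfolding ext_assign_def by (erule eval_BF_cong) auto

lemma act_X_right_inverse:
  assumes "preserves_sat h" and "\<And>\<phi>. h (k \<phi>) = \<phi>" and "k (Var (Inl x)) \<in> BF Xs"
  shows "act_X k (act_X h \<sigma>) x = \<sigma> x"
proof -
  let ?\<rho> = "case_sum \<sigma> (\<lambda>_. False)"
  have "\<sigma> x = eval ?\<rho> (h (k (Var (Inl x))))"
    using assms(2) by simp
  also have "\<dots> = eval (act_assign h ?\<rho>) (k (Var (Inl x)))"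
    using assms(1) unfolding preserves_sat_def by blast
  also have "\<dots> = act_X k (act_X h \<sigma>) x"
    unfolding act_X_def
    by (rule eval_BF_cong[OF assms(3)]) (auto simp: act_assign_def act_X_def)
  finally show ?thesis by simp
qed

lemma eval_ext_assign_cong:
  assumes "interp D s" and "\<phi> \<in> BF Ys" and "\<And>x. depends_on D \<phi> x \<Longrightarrow> \<sigma> x = \<tau> x"
  shows "eval (ext_assign \<sigma> s) \<phi> = eval (ext_assign \<tau> s) \<phi>"
proof (rule eval_cong)
  fix v assume v: "v \<in> vars \<phi>"
  then obtain l where l: "v = Inr l" using assms(2) unfolding BF_def by blast
  have "s l \<sigma> = s l \<tau>"
    using assms(1,3) v l unfolding interp_def depends_on_def by blast
  then show "ext_assign \<sigma> s v = ext_assign \<tau> s v"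
    using l unfolding ext_assign_def by simp
qed

definition interp_image ::
    "(('x + 'y) form \<Rightarrow> ('x + 'y) form) \<Rightarrow> ('y \<Rightarrow> ('x \<Rightarrow> bool) \<Rightarrow> bool)
      \<Rightarrow> ('y \<Rightarrow> ('x \<Rightarrow> bool) \<Rightarrow> bool)" where
  "interp_image g s = (\<lambda>l \<tau>. eval (ext_assign (act_X (inv g) \<tau>) s) (g (Var (Inr l))))"

lemma interp_interp_image:
  fixes g :: "('x + 'y) form \<Rightarrow> ('x + 'y) form"
  assumes g: "admissible D g" and s: "interp D s"
  shows "interp D (interp_image g s)"
  unfolding interp_def interp_image_def
proof (intro allI impI)
  fix l and \<tau>\<^sub>1 \<tau>\<^sub>2 :: "'x \<Rightarrow> bool" assume agree: "\<forall>x\<in>D l. \<tau>\<^sub>1 x = \<tau>\<^sub>2 x"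
  show "eval (ext_assign (act_X (inv g) \<tau>\<^sub>1) s) (g (Var (Inr l))) =
        eval (ext_assign (act_X (inv g) \<tau>\<^sub>2) s) (g (Var (Inr l)))"
  proof (rule eval_ext_assign_cong[OF s])
    show "g (Var (Inr l)) \<in> BF Ys" using g unfolding admissible_def by blast
  next
    fix x assume "depends_on D (g (Var (Inr l))) x"
    then have "inv g (Var (Inl x)) \<in> BF (Inl ` D l)" using g unfolding admissible_def by blast
    then show "act_X (inv g) \<tau>\<^sub>1 x = act_X (inv g) \<tau>\<^sub>2 x" by (rule act_X_cong) (use agree in blast)
  qed
qed

lemma ext_assign_interp_image:
  assumes g: "admissible D g" and g_inv: "admissible D (inv g)"
  shows "ext_assign \<tau> (interp_image g s) = act_assign g (ext_assign (act_X (inv g) \<tau>) s)"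
proof
  fix v show "ext_assign \<tau> (interp_image g s) v = act_assign g (ext_assign (act_X (inv g) \<tau>) s) v"
  proof (cases v)
    case (Inl x)
    have g_X: "g (Var (Inl x)) \<in> BF Xs" using g unfolding admissible_def by blast
    have "\<And>\<phi>. inv g (g \<phi>) = \<phi>" using g unfolding admissible_def by (simp add: bij_is_inj)
    then have "act_X g (act_X (inv g) \<tau>) x = \<tau> x"
      using g_inv g_X by (intro act_X_right_inverse) (auto simp: admissible_def)
    then show ?thesis
      using Inl g_X by (simp add: act_assign_def eval_ext_assign_BF_X) (simp add: ext_assign_def act_X_def)
  next
    case (Inr l)
    then show ?thesis by (simp add: ext_assign_def act_assign_def interp_image_def)
  qed
qed

lemma ext_assign_inj: "(\<And>\<tau>. ext_assign \<tau> t = ext_assign \<tau> t') \<Longrightarrow> t = t'"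
  unfolding ext_assign_def by (intro ext) (metis sum.case(2))

lemma act_interp_eq_interp_image:
  assumes "admissible D g" and "admissible D (inv g)" and "interp D s"
  shows "act_interp D g s = interp_image g s"
  unfolding act_interp_def
proof (rule the_equality)
  show "interp D (interp_image g s) \<and>
        (\<forall>\<tau>. ext_assign \<tau> (interp_image g s) = act_assign g (ext_assign (act_X (inv g) \<tau>) s))"
    using assms interp_interp_image ext_assign_interp_image by blast
next
  fix t assume "interp D t \<and> (\<forall>\<tau>. ext_assign \<tau> t = act_assign g (ext_assign (act_X (inv g) \<tau>) s))"
  then show "t = interp_image g s"
    using ext_assign_interp_image[OF assms(1,2)] by (intro ext_assign_inj) simp
qed

lemma act_X_inv_eq_on_dependencies:
  assumes g: "admissible D g" and dep: "depends_on D (g (Var (Inr j))) x"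
    and fixed: "\<forall>x\<in>D j. \<sigma> x = act_X g \<sigma> x"
  shows "act_X (inv g) \<sigma> x = \<sigma> x"
proof -
  have inv_x: "inv g (Var (Inl x)) \<in> BF (Inl ` D j)"
    using g dep unfolding admissible_def by blast
  have "act_X (inv g) \<sigma> x = act_X (inv g) (act_X g \<sigma>) x"
    using inv_x by (rule act_X_cong) (use fixed in blast)
  also have "\<dots> = \<sigma> x"
  proof (rule act_X_right_inverse)
    show "preserves_sat g" using g unfolding admissible_def by blast
    show "\<And>\<phi>. g (inv g \<phi>) = \<phi>"
      using g unfolding admissible_def by (simp add: bij_is_surj surj_f_inv_f)
    show "inv g (Var (Inl x)) \<in> BF Xs" using inv_x unfolding BF_def by blast
  qed
  finally show ?thesis .
qed

theorem lemma7:
  fixes D :: "'y::finite \<Rightarrow> 'x::finite set"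
    and G :: "(('x + 'y) form \<Rightarrow> ('x + 'y) form) set"
    and g :: "('x + 'y) form \<Rightarrow> ('x + 'y) form"
    and j :: 'y and \<sigma> :: "'x \<Rightarrow> bool"
  assumes "admissible_group D G"
    and "g \<in> G"
    and "\<forall>x\<in>D j. \<sigma> x = eval (case_sum \<sigma> (\<lambda>_. False)) (g (Var (Inl x)))"
    and "g (Var (Inr j)) \<in> BF (Inr ` {l. D j = D l})"
  shows "\<forall>s. interp D s \<longrightarrow>
           eval (ext_assign \<sigma> s) (g (Var (Inr j))) = ext_assign \<sigma> (act_interp D g s) (Inr j)"
proof (intro allI impI)
  fix s assume s: "interp D s"
  have g: "admissible D g" and g_inv: "admissible D (inv g)"
    using assms(1,2) unfolding admissible_group_def by blast+
  have fixed: "\<forall>x\<in>D j. \<sigma> x = act_X g \<sigma> x"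
    using assms(3) unfolding act_X_def by blast
  have "eval (ext_assign \<sigma> s) (g (Var (Inr j))) =
        eval (ext_assign (act_X (inv g) \<sigma>) s) (g (Var (Inr j)))"
  proof (rule eval_ext_assign_cong[OF s])
    show "g (Var (Inr j)) \<in> BF Ys" using g unfolding admissible_def by blast
    show "\<And>x. depends_on D (g (Var (Inr j))) x \<Longrightarrow> \<sigma> x = act_X (inv g) \<sigma> x"
      using act_X_inv_eq_on_dependencies[OF g _ fixed] by simp
  qed
  also have "\<dots> = ext_assign \<sigma> (interp_image g s) (Inr j)"
    by (simp add: ext_assign_def interp_image_def)
  also have "\<dots> = ext_assign \<sigma> (act_interp D g s) (Inr j)"
    using act_interp_eq_interp_image[OF g g_inv s] by simp
  finally show "eval (ext_assign \<sigma> s) (g (Var (Inr j))) = ext_assign \<sigma> (act_interp D g s) (Inr j)" .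
qed

end
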